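(* Let $n,N,L\ge1$ be integers and $0<p<1$. In the random model described in the context, for every address $\mathbf{x}\in C$ and every integer $s\in[2^n]$, the probability that $\mathbf{x}$ has order $s$ in $\mathcal{G}$ is $$P(\mathbf{x}\in\mathsf{X}_s)=\begin{cases}\left(\sum_{i=\ell}^{n}\binom{n}{i}p^i(1-p)^{n-i}\right)^N-\left(\sum_{i=\ell+1}^{n}\binom{n}{i}p^i(1-p)^{n-i}\right)^N, & s=2^\ell \text{ for some } \ell\in\{0,1,\dots,n\},\\[2pt] 0, & \text{otherwise.}\end{cases}$$
   Context: Model: $M=2^n$, addresses $C=\{0,1\}^n$; each address $\mathbf{x}$ carries a strand $(\mathbf{x},\mathbf{d})$ with data $\mathbf{d}$ independent uniform on $\{0,1\}^L$. Each strand is transmitted $N$ times through $\mathsf{BEC}(p)$ (each symbol independently replaced by $*$ with probability $p$, independently across transmissions and strands); $\mathcal{S}_N((\mathbf{x},\mathbf{d}))$ is the multiset of the $N$ reads of that strand. An address $\mathbf{x}'$ is compatible with a read $(\mathbf{y},\mathbf{d}')$ if it coincides with $\mathbf{y}$ at all non-erased positions of $\mathbf{y}$. The bipartite graph $\mathcal{G}$ has left vertices $C$, right vertices all $MN$ reads, and an edge between an address and a read iff they are compatible; $E_{(\mathbf{y},\mathbf{d}')}$ denotes the set of left neighbours of a read. A left vertex $\mathbf{x}$ has order $s$ if $\min\{|E_{(\mathbf{y},\mathbf{d}')}|:(\mathbf{y},\mathbf{d}')\in\mathcal{S}_N((\mathbf{x},\mathbf{d}))\}=s$; $\mathsf{X}_s$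 is the set of left vertices of order $s$. *)

theory Defs
  imports "HOL-Probability.Product_PMF"
begin

text \<open>Symbols of a read: None = erasure, Some b = received bit b.\<close>

definition bec_sym :: "real \<Rightarrow> bool \<Rightarrow> bool option pmf" where
  "bec_sym p b = map_pmf (\<lambda>e. if e then None else Some b) (bernoulli_pmf p)"

fun bec :: "real \<Rightarrow> bool list \<Rightarrow> bool option list pmf" where
  "bec p [] = return_pmf []"
| "bec p (b # bs) =
     bind_pmf (bec_sym p b) (\<lambda>c. bind_pmf (bec p bs) (\<lambda>cs. return_pmf (c # cs)))"

fun iid :: "nat \<Rightarrow> 'a pmf \<Rightarrow> 'a list pmf" where
  "iid 0 D = return_pmf []"
| "iid (Suc k) D = bind_pmf D (\<lambda>r. bind_pmf (iid k D) (\<lambda>rs. return_pmf (r # rs)))"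

text \<open>Address set C = {0,1}^n, data space {0,1}^L.\<close>
definition addrs :: "nat \<Rightarrow> bool list set" where
  "addrs n = {xs. length xs = n}"

text \<open>A strand (x,d) is the concatenated word x @ d; a read is a word of length n+L
  whose first n symbols are the (noisy) address and last L symbols the (noisy) data.\<close>
definition model :: "nat \<Rightarrow> nat \<Rightarrow> nat \<Rightarrow> real \<Rightarrow> (bool list \<Rightarrow> bool option list list) pmf" where
  "model n N L p = Pi_pmf (addrs n) []
     (\<lambda>x. bind_pmf (pmf_of_set (addrs L)) (\<lambda>d. iid N (bec p (x @ d))))"

definition compatible :: "nat \<Rightarrow> bool list \<Rightarrow> bool option list \<Rightarrow> bool" where
  "compatible n x' r \<longleftrightarrow> (\<forall>i<n. r ! i \<noteq> None \<longrightarrow> r ! i = Some (x' ! i))"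

definition nbhd :: "nat \<Rightarrow> bool option list \<Rightarrow> bool list set" where
  "nbhd n r = {x' \<in> addrs n. compatible n x' r}"

definition order_of :: "nat \<Rightarrow> (bool list \<Rightarrow> bool option list list) \<Rightarrow> bool list \<Rightarrow> nat" where
  "order_of n \<omega> x = Min ((\<lambda>r. card (nbhd n r)) ` set (\<omega> x))"

definition tailsum :: "nat \<Rightarrow> real \<Rightarrow> nat \<Rightarrow> real" where
  "tailsum n p l = (\<Sum>i=l..n. real (n choose i) * p ^ i * (1 - p) ^ (n - i))"

end

theory Submission
  imports Defs
begin

text \<open>A read whose address part has \<open>k\<close> erasures is compatible with exactly \<open>2^k\<close> addresses,
  and the address parts of the \<open>N\<close> reads of \<open>x\<close> are \<open>N\<close> independent outputs of BEC(p) on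
  \<open>x\<close>, whatever the data. So the order of \<open>x\<close> is \<open>2^m\<close> with \<open>m\<close> the minimum of \<open>N\<close>
  i.i.d. Binomial(n,p) erasure counts, and \<open>m = l\<close> exactly when all counts are \<open>\<ge> l\<close> but not
  all are \<open>> l\<close>, an event of probability \<open>P(K \<ge> l)^N - P(K > l)^N\<close>.\<close>

definition completions :: "bool option list \<Rightarrow> bool list set" where
  "completions r = {xs. list_all2 (\<lambda>c b. c = None \<or> c = Some b) r xs}"

lemma completions_Cons:
  "completions (c # r) = (\<lambda>(b, xs). b # xs) ` ({b. c = None \<or> c = Some b} \<times> completions r)"
  by (auto simp: completions_def list_all2_Cons1)

lemma card_completions: "card (completions r) = 2 ^ count_list r None"
proof (induction r)
  case (Cons c r)
  have "card {b. c = None \<or> c = Some b} = (if c = None then 2 else 1)"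
    by (cases c) (auto simp: UNIV_bool)
  moreover have "inj_on (\<lambda>(b, xs). b # xs) ({b. c = None \<or> c = Some b} \<times> completions r)"
    by (auto simp: inj_on_def)
  ultimately show ?case
    using Cons by (simp add: completions_Cons card_image card_cartesian_product)
qed (simp add: completions_def)

lemma nbhd_take: "nbhd n (take n r) = nbhd n r"
  by (simp add: nbhd_def compatible_def)

lemma nbhd_eq_completions: "length r = n \<Longrightarrow> nbhd n r = completions r"
  by (auto simp: nbhd_def completions_def addrs_def compatible_def list_all2_conv_all_nth)

lemma length_bec: "r \<in> set_pmf (bec p x) \<Longrightarrow> length r = length x"
  by (induction x arbitrary: r) auto

lemma bec_append_take: "map_pmf (take (length x)) (bec p (x @ d)) = bec p x"
proof (induction x)
  case Nil
  show ?case by (simp add: map_pmf_def bind_return_pmf')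
next
  case (Cons b x)
  show ?case using Cons[symmetric]
    by (simp add: map_bind_pmf bind_map_pmf map_pmf_def bind_return_pmf bind_assoc_pmf)
qed

lemma bec_erasure_count:
  assumes "p \<in> {0..1}"
  shows "map_pmf (\<lambda>r. count_list r None) (bec p x) = binomial_pmf (length x) p"
proof (induction x)
  case Nil
  show ?case using assms by (simp add: binomial_pmf_0)
next
  case (Cons b x)
  show ?case
    using assms
    by (auto simp: Cons[symmetric] binomial_pmf_Suc bec_sym_def map_bind_pmf bind_map_pmf
        map_pmf_def bind_return_pmf bind_assoc_pmf intro!: bind_pmf_cong)
qed

lemma iid_eq_replicate_pmf: "iid N D = replicate_pmf N D"
  by (induction N) auto

lemma replicate_pmf_map: "replicate_pmf N (map_pmf f D) = map_pmf (map f) (replicate_pmf N D)"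
  by (induction N) (simp_all add: map_bind_pmf bind_map_pmf)

lemma emeasure_replicate_pmf_all:
  "emeasure (replicate_pmf N D) {ks. \<forall>k\<in>set ks. P k} = emeasure D {k. P k} ^ N"
proof (induction N)
  case (Suc N)
  let ?A = "{ks. \<forall>k\<in>set ks. P k}"
  have "emeasure (replicate_pmf (Suc N) D) ?A
      = (\<integral>\<^sup>+k. indicator {k. P k} k * emeasure (replicate_pmf N D) ?A \<partial>D)"
    by (auto simp: bind_return_pmf map_pmf_def[symmetric] intro!: nn_integral_cong
        split: split_indicator)
  then show ?case
    using Suc by (simp add: nn_integral_multc mult.commute)
qed (simp add: measure_pmf.emeasure_space_1[simplified])

lemma prob_replicate_pmf_all:
  "measure_pmf.prob (replicate_pmf N D) {ks. \<forall>k\<in>set ks. P k} = measure_pmf.prob D {k. P k} ^ N"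
  using emeasure_replicate_pmf_all[of N D P]
  by (simp add: measure_pmf.emeasure_eq_measure ennreal_power)

lemma prob_binomial_pmf_ge:
  assumes "p \<in> {0..1}"
  shows "measure_pmf.prob (binomial_pmf n p) {k. l \<le> k} = tailsum n p l"
proof -
  have "measure_pmf.prob (binomial_pmf n p) {k. l \<le> k}
      = measure_pmf.prob (binomial_pmf n p) {l..n}"
    using assms by (intro measure_eq_AE) (auto simp: AE_measure_pmf_iff set_pmf_binomial_eq)
  also have "\<dots> = tailsum n p l"
    using assms by (simp add: measure_measure_pmf_finite tailsum_def)
  finally show ?thesis .
qed

lemma prob_Min_replicate_pmf:
  fixes D :: "'a::linorder pmf"
  assumes "N > 0"
  shows "measure_pmf.prob (replicate_pmf N D) {ks. Min (set ks) = l}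
       = measure_pmf.prob D {k. l \<le> k} ^ N - measure_pmf.prob D {k. l < k} ^ N"
proof -
  let ?M = "replicate_pmf N D"
  let ?ge = "{ks. \<forall>k\<in>set ks. l \<le> k}" and ?gt = "{ks. \<forall>k\<in>set ks. l < k}"
  have "Min (set ks) = l \<longleftrightarrow> ks \<in> ?ge - ?gt" if "ks \<noteq> []" for ks
    using that by (auto simp: Min_eq_iff not_less intro: antisym)
  then have "measure_pmf.prob ?M {ks. Min (set ks) = l} = measure_pmf.prob ?M (?ge - ?gt)"
    using assms by (intro measure_eq_AE) (auto simp: AE_measure_pmf_iff set_replicate_pmf)
  also have "\<dots> = measure_pmf.prob ?M ?ge - measure_pmf.prob ?M ?gt"
    by (rule measure_pmf.finite_measure_Diff) auto
  finally show ?thesis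
    by (simp add: prob_replicate_pmf_all)
qed

lemma finite_addrs: "finite (addrs n)"
  using finite_lists_length_eq[of "UNIV :: bool set" n] by (simp add: addrs_def)

lemma address_reads_distribution:
  assumes "x \<in> addrs n"
  shows "map_pmf (\<lambda>\<omega>. map (take n) (\<omega> x)) (model n N L p) = replicate_pmf N (bec p x)"
proof -
  have "map_pmf (\<lambda>\<omega>. \<omega> x) (model n N L p)
      = bind_pmf (pmf_of_set (addrs L)) (\<lambda>d. replicate_pmf N (bec p (x @ d)))"
    using assms unfolding model_def
    by (simp add: Pi_pmf_component finite_addrs iid_eq_replicate_pmf)
  moreover have "map_pmf (take n) (bec p (x @ d)) = bec p x" for d
    using assms bec_append_take[of x p d] by (simp add: addrs_def)
  ultimately have "map_pmf (map (take n)) (map_pmf (\<lambda>\<omega>. \<omega> x) (model n N L p))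
      = bind_pmf (pmf_of_set (addrs L)) (\<lambda>d. replicate_pmf N (bec p x))"
    by (simp add: map_bind_pmf replicate_pmf_map[symmetric])
  then show ?thesis
    by (simp add: pmf.map_comp o_def)
qed

lemma order_of_distribution:
  assumes "N > 0" and "p \<in> {0..1}" and "x \<in> addrs n"
  shows "map_pmf (\<lambda>\<omega>. order_of n \<omega> x) (model n N L p)
       = map_pmf (\<lambda>ks. 2 ^ Min (set ks)) (replicate_pmf N (binomial_pmf n p))"
proof -
  have len_x: "length x = n"
    using assms(3) by (simp add: addrs_def)
  define order_reads where "order_reads rs = Min ((\<lambda>r. card (nbhd n r)) ` set rs)" for rs
  have "order_of n \<omega> x = order_reads (map (take n) (\<omega> x))" for \<omega>
    by (simp add: order_of_def order_reads_def image_image nbhd_take)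
  then have "map_pmf (\<lambda>\<omega>. order_of n \<omega> x) (model n N L p)
      = map_pmf order_reads (replicate_pmf N (bec p x))"
    using address_reads_distribution[OF assms(3), of N L p, symmetric]
    by (simp add: pmf.map_comp o_def)
  also have "\<dots> = map_pmf (\<lambda>ks. 2 ^ Min (set ks))
      (map_pmf (map (\<lambda>r. count_list r None)) (replicate_pmf N (bec p x)))"
    unfolding pmf.map_comp
  proof (rule map_pmf_cong[OF refl])
    fix rs assume "rs \<in> set_pmf (replicate_pmf N (bec p x))"
    then have "rs \<noteq> []" and "\<forall>r\<in>set rs. length r = n"
      using assms(1) len_x by (auto simp: set_replicate_pmf length_bec)
    then show "order_reads rs = ((\<lambda>ks. 2 ^ Min (set ks)) \<circ> map (\<lambda>r. count_list r None)) rs"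
      by (simp add: order_reads_def nbhd_eq_completions card_completions image_image
          mono_Min_commute[of "\<lambda>k. 2 ^ k"] mono_def cong: image_cong)
  qed
  also have "map_pmf (map (\<lambda>r. count_list r None)) (replicate_pmf N (bec p x))
      = replicate_pmf N (binomial_pmf n p)"
    using assms(2) by (simp add: replicate_pmf_map[symmetric] bec_erasure_count len_x)
  finally show ?thesis .
qed

theorem lemma8:
  fixes n N L :: nat and p :: real and x :: "bool list" and s :: nat
  assumes "n \<ge> 1" and "N \<ge> 1" and "L \<ge> 1"
    and "0 < p" and "p < 1"
    and "x \<in> addrs n"
    and "s \<in> {1..2 ^ n}"
  shows "measure_pmf.prob (model n N L p) {\<omega>. order_of n \<omega> x = s} =
     (if \<exists>l\<in>{0..n}. s = 2 ^ l
      then (let l = (THE l. l \<in> {0..n} \<and> s = 2 ^ l) in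
              tailsum n p l ^ N - tailsum n p (l + 1) ^ N)
      else 0)"
proof -
  let ?K = "replicate_pmf N (binomial_pmf n p)"
  have p: "p \<in> {0..1}"
    using assms(4,5) by simp
  have prob_order: "measure_pmf.prob (model n N L p) {\<omega>. order_of n \<omega> x = s}
      = measure_pmf.prob ?K {ks. 2 ^ Min (set ks) = s}"
    using measure_map_pmf[of "\<lambda>\<omega>. order_of n \<omega> x" "model n N L p" "{s}"]
    using order_of_distribution[OF _ p assms(6), of N L] assms(2) by (simp add: vimage_def)
  show ?thesis
  proof (cases "\<exists>l\<in>{0..n}. s = 2 ^ l")
    case True
    then obtain l where l: "l \<in> {0..n}" "s = 2 ^ l"
      by blast
    then have "(THE l. l \<in> {0..n} \<and> s = 2 ^ l) = l"
      by (intro the_equality) auto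
    moreover have "{k. l < k} = {k. l + 1 \<le> k}"
      by auto
    ultimately show ?thesis
      using True prob_order assms(2) l(2)
      by (simp add: prob_Min_replicate_pmf prob_binomial_pmf_ge[OF p])
  next
    case False
    have "Min (set ks) \<le> n" if "ks \<in> set_pmf ?K" for ks
    proof -
      have "ks \<noteq> []" and "set ks \<subseteq> {..n}"
        using that assms(2,4,5) by (auto simp: set_replicate_pmf)
      moreover from \<open>ks \<noteq> []\<close> have "Min (set ks) \<in> set ks"
        by simp
      ultimately show ?thesis
        by (meson atMost_iff subsetD)
    qed
    then have "set_pmf ?K \<inter> {ks. 2 ^ Min (set ks) = s} = {}"
      using False by force
    then show ?thesis
      using False prob_order by (simp add: measure_pmf_zero_iff)
  qed
qed

end
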